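(* Let $(A,+,\circ)$ be a skew brace. Then $\zeta(A)$ is a central ideal of $A$, i.e. $\llbracket A,\zeta(A)\rrbracket=0$, and it contains every central ideal of $A$; thus $\zeta(A)$ is the largest central ideal of $A$.
   Context: A skew brace is a triple $(A,+,\circ)$ where $(A,+)$ and $(A,\circ)$ are groups (not necessarily abelian; $+$ is written additively) such that $x\circ(y+z)=(x\circ y)-x+(x\circ z)$ for all $x,y,z\in A$; the common neutral element is $0$, $-x$ is the $+$-inverse and $\bar x$ the $\circ$-inverse. Let $\lambda_x(y)=-x+(x\circ y)$, $x*y=-x+(x\circ y)-y$, $[x,y]_+=x+y-x-y$. An ideal is a subgroup $I$ of $(A,+)$ with $\lambda_a(I)\subseteq I$ for all $a\in A$ that is normal in both $(A,+)$ and $(A,\circ)$. A binary polynomial of $A$ is a map $A^2\to A$ of the form $(x,y)\mapsto t(c_1,\dots,c_k,x,y)$ with $t$ a term in $+,-,\circ,\bar{\ },0$ and constants $c_i\in A$; it is absorbing if $f(a,0)=f(0,a)=0$ for all $a$. For ideals $I,J$, $\llbracket I,J\rrbracket$ is the ideal generated by $\{f(i,j): i\in I,j\in J, f\text{ absorbing binary polynomial}\}$; an ideal $I$ is central if $\llbracket A,I\rrbracket=0$. The center is $\zeta(A)=\{x\in A: x*y=y*x=[x,y]_+=0\ \forall y\in A\}$. *)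

theory Defs
  imports Main
begin

text \<open>A skew brace whose underlying set is the whole type 'a.\<close>
record 'a sbrace =
  sadd :: "'a \<Rightarrow> 'a \<Rightarrow> 'a"
  sneg :: "'a \<Rightarrow> 'a"
  szero :: "'a"
  scirc :: "'a \<Rightarrow> 'a \<Rightarrow> 'a"
  sinv :: "'a \<Rightarrow> 'a"

definition is_group :: "('a \<Rightarrow> 'a \<Rightarrow> 'a) \<Rightarrow> ('a \<Rightarrow> 'a) \<Rightarrow> 'a \<Rightarrow> bool" where
  "is_group m i e \<longleftrightarrow>
     (\<forall>x y z. m (m x y) z = m x (m y z)) \<and>
     (\<forall>x. m e x = x \<and> m x e = x) \<and>
     (\<forall>x. m (i x) x = e \<and> m x (i x) = e)"

definition skew_brace :: "'a sbrace \<Rightarrow> bool" where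
  "skew_brace B \<longleftrightarrow>
     is_group (sadd B) (sneg B) (szero B) \<and>
     is_group (scirc B) (sinv B) (szero B) \<and>
     (\<forall>x y z. scirc B x (sadd B y z) =
         sadd B (sadd B (scirc B x y) (sneg B x)) (scirc B x z))"

definition ssub :: "'a sbrace \<Rightarrow> 'a \<Rightarrow> 'a \<Rightarrow> 'a" where
  "ssub B a b = sadd B a (sneg B b)"

definition slambda :: "'a sbrace \<Rightarrow> 'a \<Rightarrow> 'a \<Rightarrow> 'a" where
  "slambda B x y = sadd B (sneg B x) (scirc B x y)"

definition sstar :: "'a sbrace \<Rightarrow> 'a \<Rightarrow> 'a \<Rightarrow> 'a" where
  "sstar B x y = sadd B (sadd B (sneg B x) (scirc B x y)) (sneg B y)"

definition scomm :: "'a sbrace \<Rightarrow> 'a \<Rightarrow> 'a \<Rightarrow> 'a" where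
  "scomm B x y = sadd B (sadd B (sadd B x y) (sneg B x)) (sneg B y)"

definition normal_sub :: "('a \<Rightarrow> 'a \<Rightarrow> 'a) \<Rightarrow> ('a \<Rightarrow> 'a) \<Rightarrow> 'a \<Rightarrow> 'a set \<Rightarrow> bool" where
  "normal_sub m i e I \<longleftrightarrow>
     e \<in> I \<and> (\<forall>x\<in>I. \<forall>y\<in>I. m x y \<in> I) \<and> (\<forall>x\<in>I. i x \<in> I) \<and>
     (\<forall>a. \<forall>x\<in>I. m (m a x) (i a) \<in> I)"

definition is_ideal :: "'a sbrace \<Rightarrow> 'a set \<Rightarrow> bool" where
  "is_ideal B I \<longleftrightarrow>
     normal_sub (sadd B) (sneg B) (szero B) I \<and>
     normal_sub (scirc B) (sinv B) (szero B) I \<and>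
     (\<forall>a. \<forall>x\<in>I. slambda B a x \<in> I)"

datatype 'a bterm = VX | VY | Cst 'a | Zer | Pl "'a bterm" "'a bterm" | Ng "'a bterm"
  | Ci "'a bterm" "'a bterm" | Iv "'a bterm"

fun beval :: "'a sbrace \<Rightarrow> 'a bterm \<Rightarrow> 'a \<Rightarrow> 'a \<Rightarrow> 'a" where
  "beval B VX x y = x"
| "beval B VY x y = y"
| "beval B (Cst c) x y = c"
| "beval B Zer x y = szero B"
| "beval B (Pl s t) x y = sadd B (beval B s x y) (beval B t x y)"
| "beval B (Ng s) x y = sneg B (beval B s x y)"
| "beval B (Ci s t) x y = scirc B (beval B s x y) (beval B t x y)"
| "beval B (Iv s) x y = sinv B (beval B s x y)"

definition binary_polys :: "'a sbrace \<Rightarrow> ('a \<Rightarrow> 'a \<Rightarrow> 'a) set" where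
  "binary_polys B = {f. \<exists>t. f = beval B t}"

definition absorbing :: "'a sbrace \<Rightarrow> ('a \<Rightarrow> 'a \<Rightarrow> 'a) \<Rightarrow> bool" where
  "absorbing B f \<longleftrightarrow> (\<forall>a. f a (szero B) = szero B \<and> f (szero B) a = szero B)"

definition ideal_gen :: "'a sbrace \<Rightarrow> 'a set \<Rightarrow> 'a set" where
  "ideal_gen B S = \<Inter>{I. is_ideal B I \<and> S \<subseteq> I}"

definition term_comm :: "'a sbrace \<Rightarrow> 'a set \<Rightarrow> 'a set \<Rightarrow> 'a set" where
  "term_comm B I J = ideal_gen B
     {f i j | f i j. f \<in> binary_polys B \<and> absorbing B f \<and> i \<in> I \<and> j \<in> J}"

definition central_ideal :: "'a sbrace \<Rightarrow> 'a set \<Rightarrow> bool" where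
  "central_ideal B I \<longleftrightarrow> is_ideal B I \<and> term_comm B UNIV I = {szero B}"

definition center :: "'a sbrace \<Rightarrow> 'a set" where
  "center B = {x. \<forall>y. sstar B x y = szero B \<and> sstar B y x = szero B \<and> scomm B x y = szero B}"

end

theory Submission
  imports Defs
begin

text \<open>An element z of the center satisfies z \<circ> y = z + y = y + z = y \<circ> z for all y, so on the
  center the two group structures coincide and are central in both groups. Consequently the
  center is an ideal, and substituting y + z for y in a binary polynomial t just adds to t(x, y)
  a central element depending only on t and z. For an absorbing polynomial this element is
  t(0, z) = 0, so the center is central. Conversely, x * y, y * x and [x, y]_+ are values of
  absorbing binary polynomials, so they vanish on any central ideal.\<close>

locale skew_brace_ops =
  fixes B :: "'a sbrace"
  assumes skew_brace: "skew_brace B"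
begin

abbreviation add (infixl "\<oplus>" 65) where "x \<oplus> y \<equiv> sadd B x y"
abbreviation circ (infixl "\<odot>" 70) where "x \<odot> y \<equiv> scirc B x y"
abbreviation neg where "neg x \<equiv> sneg B x"
abbreviation inv where "inv x \<equiv> sinv B x"
abbreviation zero where "zero \<equiv> szero B"

lemma add_assoc: "(x \<oplus> y) \<oplus> z = x \<oplus> (y \<oplus> z)"
  and add_zero_left: "zero \<oplus> x = x" and add_zero_right: "x \<oplus> zero = x"
  and add_neg_left: "neg x \<oplus> x = zero" and add_neg_right: "x \<oplus> neg x = zero"
  and circ_assoc: "(x \<odot> y) \<odot> z = x \<odot> (y \<odot> z)"
  and circ_zero_left: "zero \<odot> x = x" and circ_zero_right: "x \<odot> zero = x"
  and circ_inv_left: "inv x \<odot> x = zero" and circ_inv_right: "x \<odot> inv x = zero"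
  and brace_distrib: "x \<odot> (y \<oplus> z) = (x \<odot> y) \<oplus> neg x \<oplus> (x \<odot> z)"
  using skew_brace unfolding skew_brace_def is_group_def by auto

lemma add_neg_cancel_left: "neg x \<oplus> (x \<oplus> y) = y"
  by (metis add_assoc add_neg_left add_zero_left)

lemma add_neg_cancel_left': "x \<oplus> (neg x \<oplus> y) = y"
  by (metis add_assoc add_neg_right add_zero_left)

lemma add_neg_cancel_right: "x \<oplus> y \<oplus> neg y = x"
  by (metis add_assoc add_neg_right add_zero_right)

lemma circ_inv_cancel_left: "x \<odot> (inv x \<odot> y) = y"
  by (metis circ_assoc circ_inv_right circ_zero_left)

lemmas group_simps = add_assoc add_zero_left add_zero_right add_neg_left add_neg_right
  circ_assoc circ_zero_left circ_zero_right circ_inv_left circ_inv_right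
  add_neg_cancel_left add_neg_cancel_left' circ_inv_cancel_left

lemma neg_zero: "neg zero = zero"
  by (metis add_zero_left add_neg_right)

lemma inv_zero: "inv zero = zero"
  by (metis circ_zero_left circ_inv_right)

lemma neg_add: "neg (x \<oplus> y) = neg y \<oplus> neg x"
  by (metis add_assoc add_neg_cancel_left add_neg_right add_zero_right)

lemma inv_circ: "inv (x \<odot> y) = inv y \<odot> inv x"
  by (metis circ_assoc circ_inv_left circ_inv_right circ_zero_left circ_zero_right)

lemma center_iff:
  "z \<in> center B \<longleftrightarrow> (\<forall>y. z \<odot> y = z \<oplus> y \<and> y \<odot> z = y \<oplus> z \<and> z \<oplus> y = y \<oplus> z)"
proof -
  have sub_eq_zero: "a \<oplus> neg b = zero \<longleftrightarrow> a = b" for a b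
    by (metis add_neg_cancel_right add_neg_right add_zero_left)
  have neg_add_eq: "neg a \<oplus> b = c \<longleftrightarrow> b = a \<oplus> c" for a b c
    by (metis add_neg_cancel_left add_neg_cancel_left')
  have sub_eq: "a \<oplus> neg b = c \<longleftrightarrow> a = c \<oplus> b" for a b c
    by (metis add_neg_cancel_right add_assoc add_neg_left add_zero_right)
  show ?thesis
    unfolding center_def sstar_def scomm_def
    by (simp add: sub_eq_zero neg_add_eq sub_eq add_zero_left)
qed

context
  fixes z assumes z: "z \<in> center B"
begin

lemma center_circ_left: "z \<odot> y = z \<oplus> y"
  and center_circ_right: "y \<odot> z = y \<oplus> z"
  and center_add_commute: "z \<oplus> y = y \<oplus> z"
  using z by (auto simp: center_iff)

lemma center_circ_commute: "z \<odot> y = y \<odot> z"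
  by (simp add: center_circ_left center_circ_right center_add_commute)

lemma center_inv_eq_neg: "inv z = neg z"
  by (metis center_circ_left circ_inv_right add_neg_cancel_left add_zero_right)

lemma center_neg_add_commute: "neg z \<oplus> y = y \<oplus> neg z"
  by (metis center_add_commute add_neg_cancel_left add_neg_cancel_right add_assoc)

lemma center_neg_closed: "neg z \<in> center B"
  unfolding center_iff
proof (intro allI conjI)
  fix y
  have "y = z \<odot> (inv z \<odot> y)" by (simp add: group_simps)
  then show "neg z \<odot> y = neg z \<oplus> y"
    by (metis center_circ_left center_inv_eq_neg add_neg_cancel_left)
  have "y = y \<odot> (z \<oplus> neg z)" by (simp add: group_simps)
  also have "\<dots> = (y \<odot> z) \<oplus> neg y \<oplus> (y \<odot> neg z)" by (rule brace_distrib)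
  also have "(y \<odot> z) \<oplus> neg y = z"
    by (metis center_circ_right center_add_commute add_neg_cancel_right)
  finally show "y \<odot> neg z = y \<oplus> neg z"
    by (metis add_neg_cancel_left center_neg_add_commute)
  show "neg z \<oplus> y = y \<oplus> neg z" by (rule center_neg_add_commute)
qed

end

lemma center_add_closed:
  assumes x: "x \<in> center B" and y: "y \<in> center B"
  shows "x \<oplus> y \<in> center B"
  unfolding center_iff
proof (intro allI conjI)
  fix u
  show "(x \<oplus> y) \<odot> u = (x \<oplus> y) \<oplus> u"
    by (metis x y center_circ_left circ_assoc add_assoc)
  have "u \<odot> (x \<oplus> y) = (x \<oplus> u) \<oplus> neg u \<oplus> (u \<oplus> y)"
    by (simp add: brace_distrib x y center_circ_right center_add_commute)
  also have "\<dots> = u \<oplus> (x \<oplus> y)"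
    by (metis x add_assoc add_neg_cancel_left' add_neg_cancel_right center_add_commute)
  finally show "u \<odot> (x \<oplus> y) = u \<oplus> (x \<oplus> y)" .
  show "(x \<oplus> y) \<oplus> u = u \<oplus> (x \<oplus> y)"
    by (metis x y add_assoc center_add_commute)
qed

lemma zero_in_center: "zero \<in> center B"
  unfolding center_iff by (simp add: group_simps)

lemma is_ideal_center: "is_ideal B (center B)"
proof -
  have "a \<oplus> x \<oplus> neg a = x" if "x \<in> center B" for a x
    using that center_add_commute add_neg_cancel_right by metis
  moreover have "a \<odot> x \<odot> inv a = x" if "x \<in> center B" for a x
    using that center_circ_commute circ_assoc circ_inv_right circ_zero_right by metis
  moreover have "slambda B a x = x" if "x \<in> center B" for a x
    using that center_circ_right add_neg_cancel_left unfolding slambda_def by metis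
  ultimately show ?thesis
    unfolding is_ideal_def normal_sub_def
    using zero_in_center center_add_closed center_neg_closed
    by (auto simp: center_circ_left center_inv_eq_neg)
qed

lemma circ_add_center:
  assumes v: "v \<in> center B" and w: "w \<in> center B"
  shows "(a \<oplus> v) \<odot> (b \<oplus> w) = (a \<odot> b) \<oplus> (v \<oplus> w)"
proof -
  have "(a \<oplus> v) \<odot> (b \<oplus> w) = a \<odot> (v \<odot> (b \<odot> w))"
    by (simp only: center_circ_right[OF v, symmetric] center_circ_right[OF w, symmetric]
        circ_assoc)
  also have "v \<odot> (b \<odot> w) = b \<odot> (w \<odot> v)"
    by (metis v center_circ_commute circ_assoc)
  also have "w \<odot> v = v \<oplus> w"
    by (metis w center_circ_left center_add_commute)
  also have "a \<odot> (b \<odot> (v \<oplus> w)) = (a \<odot> b) \<oplus> (v \<oplus> w)"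
    by (metis v w center_add_closed center_circ_right circ_assoc)
  finally show ?thesis .
qed

lemma inv_add_center:
  assumes v: "v \<in> center B"
  shows "inv (a \<oplus> v) = inv a \<oplus> neg v"
  by (metis v center_circ_right center_circ_commute center_inv_eq_neg center_neg_closed inv_circ)

lemma eval_add_center:
  assumes z: "z \<in> center B"
  shows "\<exists>w \<in> center B. \<forall>x y. beval B t x (y \<oplus> z) = beval B t x y \<oplus> w"
proof (induction t)
  case (Pl s t)
  then obtain v w where v: "v \<in> center B" "\<And>x y. beval B s x (y \<oplus> z) = beval B s x y \<oplus> v"
    and w: "w \<in> center B" "\<And>x y. beval B t x (y \<oplus> z) = beval B t x y \<oplus> w"
    by blast
  have "beval B (Pl s t) x (y \<oplus> z) = beval B (Pl s t) x y \<oplus> (v \<oplus> w)" for x y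
    using v w by (metis beval.simps(5) add_assoc center_add_commute)
  then show ?case using v w center_add_closed by blast
next
  case (Ng s)
  then obtain v where v: "v \<in> center B" "\<And>x y. beval B s x (y \<oplus> z) = beval B s x y \<oplus> v"
    by blast
  have "beval B (Ng s) x (y \<oplus> z) = beval B (Ng s) x y \<oplus> neg v" for x y
    using v by (simp add: neg_add center_neg_add_commute)
  then show ?case using v center_neg_closed by blast
next
  case (Ci s t)
  then obtain v w where v: "v \<in> center B" "\<And>x y. beval B s x (y \<oplus> z) = beval B s x y \<oplus> v"
    and w: "w \<in> center B" "\<And>x y. beval B t x (y \<oplus> z) = beval B t x y \<oplus> w"
    by blast
  have "beval B (Ci s t) x (y \<oplus> z) = beval B (Ci s t) x y \<oplus> (v \<oplus> w)" for x y
    using v w by (simp add: circ_add_center)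
  then show ?case using v w center_add_closed by blast
next
  case (Iv s)
  then obtain v where v: "v \<in> center B" "\<And>x y. beval B s x (y \<oplus> z) = beval B s x y \<oplus> v"
    by blast
  have "beval B (Iv s) x (y \<oplus> z) = beval B (Iv s) x y \<oplus> neg v" for x y
    using v by (simp add: inv_add_center)
  then show ?case using v center_neg_closed by blast
qed (use z zero_in_center add_zero_right in \<open>simp; metis\<close>)+

lemma absorbing_poly_center:
  assumes z: "z \<in> center B" and f: "f \<in> binary_polys B" "absorbing B f"
  shows "f x z = zero"
proof -
  obtain t where t: "f = beval B t"
    using f(1) unfolding binary_polys_def by auto
  obtain w where w: "\<And>x y. f x (y \<oplus> z) = f x y \<oplus> w"
    using eval_add_center[OF z] t by blast
  have f0: "f u zero = zero" "f zero u = zero" for u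
    using f(2) unfolding absorbing_def by auto
  have "w = zero"
    using w[of zero zero] by (simp add: f0 add_zero_left)
  then show ?thesis
    using w[of x zero] by (simp add: f0 add_zero_left add_zero_right)
qed

lemma is_ideal_zero: "is_ideal B {zero}"
  unfolding is_ideal_def normal_sub_def slambda_def
  by (simp add: group_simps neg_zero inv_zero)

lemma central_ideal_center: "central_ideal B (center B)"
proof -
  have "term_comm B UNIV (center B) \<subseteq> {zero}"
    unfolding term_comm_def ideal_gen_def
    using is_ideal_zero absorbing_poly_center by blast
  moreover have "zero \<in> term_comm B UNIV (center B)"
    unfolding term_comm_def ideal_gen_def is_ideal_def normal_sub_def by blast
  ultimately show ?thesis
    unfolding central_ideal_def using is_ideal_center by blast
qed

lemma central_ideal_subset_center:
  assumes "central_ideal B I"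
  shows "I \<subseteq> center B"
proof
  fix x assume x: "x \<in> I"
  have vanish: "beval B t y x = zero" if "absorbing B (beval B t)" for t y
  proof -
    have "beval B t y x \<in> term_comm B UNIV I"
      unfolding term_comm_def ideal_gen_def binary_polys_def using x that by blast
    then show ?thesis
      using assms unfolding central_ideal_def by blast
  qed
  have "absorbing B (beval B (Pl (Pl (Ng VY) (Ci VY VX)) (Ng VX)))"
    and "absorbing B (beval B (Pl (Pl (Ng VX) (Ci VX VY)) (Ng VY)))"
    and "absorbing B (beval B (Pl (Pl (Pl VY VX) (Ng VY)) (Ng VX)))"
    unfolding absorbing_def by (simp_all add: group_simps neg_zero)
  from this[THEN vanish] show "x \<in> center B"
    unfolding center_def sstar_def scomm_def by simp
qed

end

theorem mainTheorem16:
  fixes B :: "'a sbrace"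
  assumes "skew_brace B"
  shows "central_ideal B (center B) \<and>
         (\<forall>I. central_ideal B I \<longrightarrow> I \<subseteq> center B)"
proof -
  interpret skew_brace_ops B by (rule skew_brace_ops.intro) (fact assms)
  show ?thesis using central_ideal_center central_ideal_subset_center by blast
qed

end
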